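(* Let $(\mathfrak{A},\mathfrak{A}_0)$ be a *-semisimple CQ*-algebra as in the context and let $X\in\mathfrak{A}$ with $X=X^*$. Then every generalized eigenvalue of $X$ is real.
   Context: Let $\mathfrak{A}_0$ be a unital C*-algebra with C*-norm $\|\cdot\|_0$ and unit $I$, and $\|\cdot\|$ another norm on $\mathfrak{A}_0$ with $\|A\|\le\|A\|_0$, $\|AB\|\le\|A\|\,\|B\|_0$, $\|A^*\|=\|A\|$. $\mathfrak{A}$ is the $\|\cdot\|$-completion of $\mathfrak{A}_0$, with $XA,AX,X^*$ ($X\in\mathfrak{A},A\in\mathfrak{A}_0$) defined as $\|\cdot\|$-limits of $A_nA$, $AA_n$, $A_n^*$ for $A_n\in\mathfrak{A}_0$, $A_n\to X$. $\mathcal{P}_{\mathfrak{A}_0}(\mathfrak{A})$ is the set of sesquilinear forms $\varphi$ on $\mathfrak{A}\times\mathfrak{A}$ with $\varphi(X,X)\ge0$, $\varphi(XA,B)=\varphi(A,X^*B)$ for $X\in\mathfrak{A}$, $A,B\in\mathfrak{A}_0$, and $|\varphi(X,Y)|\le\gamma\|X\|\|Y\|$ for some $\gamma>0$; $\mathcal{S}_{\mathfrak{A}_0}(\mathfrak{A})$ is the subset with $\gamma\le1$. *-semisimple: for every $X\ne0$ there is $\varphi\in\mathcal{S}_{\mathfrak{A}_0}(\mathfrak{A})$ with $\varphi(X,X)>0$. A complex number $\alpha$ is a generalized eigenvalue of $X\in\mathfrak{A}$ if there exist a nonzero $\varphi\in\mathcal{P}_{\mathfrak{A}_0}(\mathfrak{A})$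 and $A\in\mathfrak{A}_0$ with $\varphi(A,A)>0$ and $\varphi(XA-\alpha A,B)=0$ for all $B\in\mathfrak{A}_0$. *)

theory Defs
  imports "HOL-Analysis.Analysis"
begin

text \<open>
  The type 'a (a Banach space with norm
  \<open>norm\<close>) carries a complex scalar multiplication \<open>sc\<close> extending the real one and
  compatible with the norm; it is the completion A.  The set A0 is a dense
  complex subspace which is a unital C*-algebra with multiplication \<open>mul\<close>,
  involution \<open>star\<close>, unit \<open>e\<close> and C*-norm \<open>n0\<close>.  The functions \<open>mul\<close> and \<open>star\<close>
  are total on 'a; they are constrained by the definition of X A, A X and X*
  as norm-limits along sequences A_n in A0 converging to X.
\<close>

definition complex_structure :: "(complex \<Rightarrow> 'a::real_normed_vector \<Rightarrow> 'a) \<Rightarrow> bool" where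
  "complex_structure sc \<longleftrightarrow>
     (\<forall>r x. sc (complex_of_real r) x = r *\<^sub>R x) \<and>
     (\<forall>a b x. sc (a + b) x = sc a x + sc b x) \<and>
     (\<forall>a x y. sc a (x + y) = sc a x + sc a y) \<and>
     (\<forall>a b x. sc (a * b) x = sc a (sc b x)) \<and>
     (\<forall>a x. norm (sc a x) = cmod a * norm x)"

definition is_cstar_algebra ::
  "(complex \<Rightarrow> 'a::real_normed_vector \<Rightarrow> 'a) \<Rightarrow> 'a set \<Rightarrow> ('a \<Rightarrow> real) \<Rightarrow> ('a \<Rightarrow> 'a \<Rightarrow> 'a)
    \<Rightarrow> ('a \<Rightarrow> 'a) \<Rightarrow> 'a \<Rightarrow> bool"
where
  "is_cstar_algebra sc A0 n0 mul star e \<longleftrightarrow>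
     \<comment> \<open>complex subspace\<close>
     0 \<in> A0 \<and> (\<forall>a\<in>A0. \<forall>b\<in>A0. a + b \<in> A0) \<and> (\<forall>c. \<forall>a\<in>A0. sc c a \<in> A0) \<and>
     \<comment> \<open>unital associative algebra\<close>
     (\<forall>a\<in>A0. \<forall>b\<in>A0. mul a b \<in> A0) \<and>
     (\<forall>a\<in>A0. \<forall>b\<in>A0. \<forall>c\<in>A0. mul (mul a b) c = mul a (mul b c)) \<and>
     (\<forall>a\<in>A0. \<forall>b\<in>A0. \<forall>c\<in>A0. mul (a + b) c = mul a c + mul b c \<and> mul a (b + c) = mul a b + mul a c) \<and>
     (\<forall>z. \<forall>a\<in>A0. \<forall>b\<in>A0. mul (sc z a) b = sc z (mul a b) \<and> mul a (sc z b) = sc z (mul a b)) \<and>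
     e \<in> A0 \<and> (\<forall>a\<in>A0. mul e a = a \<and> mul a e = a) \<and>
     \<comment> \<open>involution\<close>
     (\<forall>a\<in>A0. star a \<in> A0 \<and> star (star a) = a) \<and>
     (\<forall>a\<in>A0. \<forall>b\<in>A0. star (a + b) = star a + star b) \<and>
     (\<forall>z. \<forall>a\<in>A0. star (sc z a) = sc (cnj z) (star a)) \<and>
     (\<forall>a\<in>A0. \<forall>b\<in>A0. star (mul a b) = mul (star b) (star a)) \<and>
     \<comment> \<open>C*-norm\<close>
     (\<forall>a\<in>A0. 0 \<le> n0 a) \<and> (\<forall>a\<in>A0. n0 a = 0 \<longleftrightarrow> a = 0) \<and>
     (\<forall>a\<in>A0. \<forall>b\<in>A0. n0 (a + b) \<le> n0 a + n0 b) \<and>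
     (\<forall>z. \<forall>a\<in>A0. n0 (sc z a) = cmod z * n0 a) \<and>
     (\<forall>a\<in>A0. \<forall>b\<in>A0. n0 (mul a b) \<le> n0 a * n0 b) \<and>
     (\<forall>a\<in>A0. n0 (mul (star a) a) = (n0 a)\<^sup>2) \<and>
     \<comment> \<open>completeness w.r.t. the C*-norm\<close>
     (\<forall>s. (\<forall>n. s n \<in> A0) \<longrightarrow>
          (\<forall>\<epsilon>>0. \<exists>N. \<forall>m\<ge>N. \<forall>n\<ge>N. n0 (s m - s n) < \<epsilon>) \<longrightarrow>
          (\<exists>l\<in>A0. (\<lambda>n. n0 (s n - l)) \<longlonglongrightarrow> 0))"

definition is_CQ_star_algebra ::
  "(complex \<Rightarrow> 'a::banach \<Rightarrow> 'a) \<Rightarrow> 'a set \<Rightarrow> ('a \<Rightarrow> real) \<Rightarrow> ('a \<Rightarrow> 'a \<Rightarrow> 'a)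
    \<Rightarrow> ('a \<Rightarrow> 'a) \<Rightarrow> 'a \<Rightarrow> bool"
where
  "is_CQ_star_algebra sc A0 n0 mul star e \<longleftrightarrow>
     complex_structure sc \<and>
     is_cstar_algebra sc A0 n0 mul star e \<and>
     \<comment> \<open>A (the whole type, a Banach space) is the norm-completion of A0\<close>
     closure A0 = UNIV \<and>
     \<comment> \<open>conditions on the second norm\<close>
     (\<forall>a\<in>A0. norm a \<le> n0 a) \<and>
     (\<forall>a\<in>A0. \<forall>b\<in>A0. norm (mul a b) \<le> norm a * n0 b) \<and>
     (\<forall>a\<in>A0. norm (star a) = norm a) \<and>
     \<comment> \<open>X A, A X, X* as norm-limits\<close>
     (\<forall>X a s. a \<in> A0 \<longrightarrow> (\<forall>n. s n \<in> A0) \<longrightarrow> s \<longlonglongrightarrow> X \<longrightarrow>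
        (\<lambda>n. mul (s n) a) \<longlonglongrightarrow> mul X a \<and>
        (\<lambda>n. mul a (s n)) \<longlonglongrightarrow> mul a X \<and>
        (\<lambda>n. star (s n)) \<longlonglongrightarrow> star X)"

definition sesquilinear :: "(complex \<Rightarrow> 'a::real_normed_vector \<Rightarrow> 'a) \<Rightarrow> ('a \<Rightarrow> 'a \<Rightarrow> complex) \<Rightarrow> bool" where
  "sesquilinear sc \<phi> \<longleftrightarrow>
     (\<forall>x y z. \<phi> (x + y) z = \<phi> x z + \<phi> y z) \<and>
     (\<forall>c x z. \<phi> (sc c x) z = c * \<phi> x z) \<and>
     (\<forall>x y z. \<phi> x (y + z) = \<phi> x y + \<phi> x z) \<and>
     (\<forall>c x z. \<phi> x (sc c z) = cnj c * \<phi> x z)"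

definition PA0 :: "(complex \<Rightarrow> 'a::real_normed_vector \<Rightarrow> 'a) \<Rightarrow> 'a set \<Rightarrow> ('a \<Rightarrow> 'a \<Rightarrow> 'a)
                    \<Rightarrow> ('a \<Rightarrow> 'a) \<Rightarrow> ('a \<Rightarrow> 'a \<Rightarrow> complex) set" where
  "PA0 sc A0 mul star = {\<phi>. sesquilinear sc \<phi> \<and>
      (\<forall>X. \<phi> X X \<in> \<real> \<and> 0 \<le> Re (\<phi> X X)) \<and>
      (\<forall>X. \<forall>a\<in>A0. \<forall>b\<in>A0. \<phi> (mul X a) b = \<phi> a (mul (star X) b)) \<and>
      (\<exists>\<gamma>>0. \<forall>X Y. cmod (\<phi> X Y) \<le> \<gamma> * norm X * norm Y)}"

definition SA0 :: "(complex \<Rightarrow> 'a::real_normed_vector \<Rightarrow> 'a) \<Rightarrow> 'a set \<Rightarrow> ('a \<Rightarrow> 'a \<Rightarrow> 'a)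
                    \<Rightarrow> ('a \<Rightarrow> 'a) \<Rightarrow> ('a \<Rightarrow> 'a \<Rightarrow> complex) set" where
  "SA0 sc A0 mul star = {\<phi> \<in> PA0 sc A0 mul star.
      \<forall>X Y. cmod (\<phi> X Y) \<le> norm X * norm Y}"

definition star_semisimple :: "(complex \<Rightarrow> 'a::real_normed_vector \<Rightarrow> 'a) \<Rightarrow> 'a set
    \<Rightarrow> ('a \<Rightarrow> 'a \<Rightarrow> 'a) \<Rightarrow> ('a \<Rightarrow> 'a) \<Rightarrow> bool" where
  "star_semisimple sc A0 mul star \<longleftrightarrow>
     (\<forall>X. X \<noteq> 0 \<longrightarrow> (\<exists>\<phi>\<in>SA0 sc A0 mul star. \<phi> X X \<in> \<real> \<and> Re (\<phi> X X) > 0))"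

definition generalized_eigenvalue ::
  "(complex \<Rightarrow> 'a::real_normed_vector \<Rightarrow> 'a) \<Rightarrow> 'a set \<Rightarrow> ('a \<Rightarrow> 'a \<Rightarrow> 'a) \<Rightarrow> ('a \<Rightarrow> 'a)
    \<Rightarrow> 'a \<Rightarrow> complex \<Rightarrow> bool" where
  "generalized_eigenvalue sc A0 mul star X \<alpha> \<longleftrightarrow>
     (\<exists>\<phi>\<in>PA0 sc A0 mul star. \<phi> \<noteq> (\<lambda>_ _. 0) \<and>
       (\<exists>a\<in>A0. \<phi> a a \<in> \<real> \<and> Re (\<phi> a a) > 0 \<and>
          (\<forall>b\<in>A0. \<phi> (mul X a - sc \<alpha> a) b = 0)))"

end

theory Submission
  imports Defs
begin

text \<open>
  For a self-adjoint X and a form \<phi> in P_A0(A), invariance gives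
  \<phi>(XA, A) = \<phi>(A, XA), and a positive form is Hermitian, so \<phi>(XA, A) is real.
  If A is a generalized eigenvector for \<alpha> then \<phi>(XA, A) = \<alpha> \<phi>(A, A) with
  \<phi>(A, A) > 0, whence \<alpha> is real.
\<close>

lemma sesquilinear_diff_left:
  assumes "sesquilinear sc \<phi>"
  shows "\<phi> (x - y) z = \<phi> x z - \<phi> y z"
proof -
  have "\<phi> (x - y + y) z = \<phi> (x - y) z + \<phi> y z"
    using assms unfolding sesquilinear_def by blast
  then show ?thesis by simp
qed

lemma sesquilinear_cnj_commute:
  assumes S: "sesquilinear sc \<phi>" and real_diag: "\<And>x. \<phi> x x \<in> \<real>"
  shows "\<phi> y x = cnj (\<phi> x y)"
proof -
  have add1: "\<And>x y z. \<phi> (x + y) z = \<phi> x z + \<phi> y z"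
    and sc1: "\<And>c x z. \<phi> (sc c x) z = c * \<phi> x z"
    and add2: "\<And>x y z. \<phi> x (y + z) = \<phi> x y + \<phi> x z"
    and sc2: "\<And>c x z. \<phi> x (sc c z) = cnj c * \<phi> x z"
    using S unfolding sesquilinear_def by auto
  have "Im (\<phi> (x + y) (x + y)) = 0" "Im (\<phi> (x + sc \<i> y) (x + sc \<i> y)) = 0"
       "Im (\<phi> x x) = 0" "Im (\<phi> y y) = 0"
    using real_diag complex_is_Real_iff by blast+
  then show ?thesis
    by (simp add: add1 add2 sc1 sc2 algebra_simps complex_eq_iff)
qed

lemma PA0_selfadjoint_form_real:
  assumes "\<phi> \<in> PA0 sc A0 mul star" and "a \<in> A0" and "star X = X"
  shows "\<phi> (mul X a) a \<in> \<real>"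
proof -
  have S: "sesquilinear sc \<phi>" and real_diag: "\<And>x. \<phi> x x \<in> \<real>"
    and "\<phi> (mul X a) a = \<phi> a (mul (star X) a)"
    using assms unfolding PA0_def by auto
  with \<open>star X = X\<close> have "\<phi> (mul X a) a = cnj (\<phi> (mul X a) a)"
    using sesquilinear_cnj_commute[OF S real_diag] by metis
  then show ?thesis
    by (simp add: Reals_cnj_iff)
qed

lemma PA0_eigenvector_form:
  assumes "\<phi> \<in> PA0 sc A0 mul star" and "a \<in> A0"
    and "\<forall>b\<in>A0. \<phi> (mul X a - sc \<alpha> a) b = 0"
  shows "\<phi> (mul X a) a = \<alpha> * \<phi> a a"
proof -
  have S: "sesquilinear sc \<phi>"
    using assms(1) unfolding PA0_def by blast
  have "\<phi> (mul X a) a - \<phi> (sc \<alpha> a) a = 0"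
    using assms(2,3) sesquilinear_diff_left[OF S] by metis
  with S show ?thesis
    unfolding sesquilinear_def by simp
qed

lemma generalized_eigenvalue_selfadjoint_real:
  assumes "star X = X" and "generalized_eigenvalue sc A0 mul star X \<alpha>"
  shows "\<alpha> \<in> \<real>"
proof -
  obtain \<phi> a where \<phi>: "\<phi> \<in> PA0 sc A0 mul star" and a: "a \<in> A0"
    and pos: "\<phi> a a \<in> \<real>" "Re (\<phi> a a) > 0"
    and eigen: "\<forall>b\<in>A0. \<phi> (mul X a - sc \<alpha> a) b = 0"
    using assms(2) unfolding generalized_eigenvalue_def by blast
  have "\<alpha> * \<phi> a a \<in> \<real>"
    using PA0_selfadjoint_form_real[OF \<phi> a assms(1)] PA0_eigenvector_form[OF \<phi> a eigen]
    by simp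
  then have "\<alpha> * \<phi> a a / \<phi> a a \<in> \<real>"
    using pos(1) by (rule Reals_divide)
  moreover have "\<phi> a a \<noteq> 0"
    using pos(2) by auto
  ultimately show ?thesis
    by simp
qed

theorem corollary4p16:
  fixes sc :: "complex \<Rightarrow> 'a::banach \<Rightarrow> 'a" and A0 :: "'a set"
    and n0 :: "'a \<Rightarrow> real" and mul :: "'a \<Rightarrow> 'a \<Rightarrow> 'a" and star :: "'a \<Rightarrow> 'a"
    and e X :: 'a and \<alpha> :: complex
  assumes "is_CQ_star_algebra sc A0 n0 mul star e"
    and "star_semisimple sc A0 mul star"
    and "star X = X"
    and "generalized_eigenvalue sc A0 mul star X \<alpha>"
  shows "\<alpha> \<in> \<real>"
  using assms(3,4) by (rule generalized_eigenvalue_selfadjoint_real)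

end
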